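(* In the bosonic setting described in the context, if $g\in\mathrm{Sp}(V)$ then the Gaussian vector $f_{T_g}$ satisfies $$a_{gJg^{-1}}(gv)\,f_{T_g}=0\quad\text{for all }v\in V,$$ where $a_{gJg^{-1}}(gv)=\tfrac12\bigl(\phi(gv)+i\,\phi(gJv)\bigr)$.
   Context: Let $V$ be a real vector space of dimension $2m$ with a nondegenerate skew-symmetric bilinear form $s$ and a real-linear $J$ with $J^2=-1$, $s(Ju,Jv)=s(u,v)$, and $s(u,Ju)>0$ for $u\ne0$. Put $d(u,v):=s(u,Jv)$ (a real inner product; $A^t$ denotes the $d$-transpose). Make $V$ a complex vector space by $(a+bi)v:=av+bJv$ with Hermitian inner product $\langle u|v\rangle:=d(u,v)+is(u,v)$ (antilinear in $u$). $\mathrm{Sp}(V)$ is the group of real-linear $g$ with $s(gu,gv)=s(u,v)$. For $g\in\mathrm{Sp}(V)$, $p_g:=\tfrac12(g-JgJ)$ (which is invertible), $q_g:=\tfrac12(g+JgJ)$, and $T_g:=q_gp_g^{-1}$; $T_g$ is antilinear ($T_gJ=-JT_g$), $d$-symmetric, and $1-T_g^2$ is positive definite. The bosonic Fock space $\mathcal B(V)$ is the Hilbert space of antiholomorphic $F:V\to\mathbb C$ with $\int_V|F(u)|^2e^{-\frac12\langle u|u\rangle}\,du<\infty$, $du=(2\pi)^{-m}$ times Lebesgue measure. Weyl operators: $\beta(v)F(u):=e^{\frac14\langle 2u-v|v\rangle}F(u-v)$; $\phi(v)$ is the self-adjoint operator with $\exp(it\phi(v))=\beta(\sqrt2\,tv)$.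 For a complex structure $K$ on $V$, $a_K(w):=\tfrac12(\phi(w)+i\phi(Kw))$. For an antilinear $d$-symmetric $T$ with $1-T^2>0$, the Gaussian is $f_T(u):=\exp\bigl(\tfrac14\langle u|Tu\rangle\bigr)\in\mathcal B(V)$. *)

theory Defs
  imports "HOL-Analysis.Analysis"
begin

text \<open>The real vector space V is modelled by a finite-dimensional type 'v.
  s is the symplectic form, J the complex structure.\<close>

definition herm :: "('v::real_vector \<Rightarrow> 'v \<Rightarrow> real) \<Rightarrow> ('v \<Rightarrow> 'v) \<Rightarrow> 'v \<Rightarrow> 'v \<Rightarrow> complex" where
  "herm s J u v = complex_of_real (s u (J v)) + \<i> * complex_of_real (s u v)"

definition fock_norm2 :: "('v::euclidean_space \<Rightarrow> 'v \<Rightarrow> real) \<Rightarrow> ('v \<Rightarrow> 'v) \<Rightarrow> ('v \<Rightarrow> complex) \<Rightarrow> ennreal" where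
  "fock_norm2 s J F =
     ennreal (inverse ((2 * pi) ^ (DIM('v) div 2))) *
     (\<integral>\<^sup>+ u. ennreal ((cmod (F u))\<^sup>2 * exp (- (1/2) * s u (J u))) \<partial>lborel)"

text \<open>antiholomorphic with respect to the complex structure (a+bi)v = av + bJv\<close>
definition antiholomorphic :: "('v::real_normed_vector \<Rightarrow> 'v) \<Rightarrow> ('v \<Rightarrow> complex) \<Rightarrow> bool" where
  "antiholomorphic J F \<longleftrightarrow>
     (\<forall>x. \<exists>D. (F has_derivative D) (at x) \<and> (\<forall>w. D (J w) = - \<i> * D w))"

definition fock_space :: "('v::euclidean_space \<Rightarrow> 'v \<Rightarrow> real) \<Rightarrow> ('v \<Rightarrow> 'v) \<Rightarrow> ('v \<Rightarrow> complex) set" where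
  "fock_space s J = {F. antiholomorphic J F \<and> fock_norm2 s J F < \<infinity>}"

definition weyl :: "('v::real_vector \<Rightarrow> 'v \<Rightarrow> real) \<Rightarrow> ('v \<Rightarrow> 'v) \<Rightarrow> 'v \<Rightarrow> ('v \<Rightarrow> complex) \<Rightarrow> ('v \<Rightarrow> complex)" where
  "weyl s J v F = (\<lambda>u. exp ((1/4) * herm s J (2 *\<^sub>R u - v) v) * F (u - v))"

text \<open>phi(v) F = G: the self-adjoint generator of the unitary group t |-> beta(sqrt 2 t v),
  i.e. F is in its domain and (beta(sqrt 2 t v) F - F)/t tends to i G in the Fock norm (Stone).\<close>
definition has_phi :: "('v::euclidean_space \<Rightarrow> 'v \<Rightarrow> real) \<Rightarrow> ('v \<Rightarrow> 'v) \<Rightarrow> 'v \<Rightarrow> ('v \<Rightarrow> complex) \<Rightarrow> ('v \<Rightarrow> complex) \<Rightarrow> bool" where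
  "has_phi s J v F G \<longleftrightarrow> F \<in> fock_space s J \<and> G \<in> fock_space s J \<and>
     ((\<lambda>t::real. fock_norm2 s J
        (\<lambda>u. (weyl s J ((sqrt 2 * t) *\<^sub>R v) F u - F u) / complex_of_real t - \<i> * G u))
       \<longlongrightarrow> 0) (at 0)"

definition has_a :: "('v::euclidean_space \<Rightarrow> 'v \<Rightarrow> real) \<Rightarrow> ('v \<Rightarrow> 'v) \<Rightarrow> ('v \<Rightarrow> 'v) \<Rightarrow> 'v \<Rightarrow> ('v \<Rightarrow> complex) \<Rightarrow> ('v \<Rightarrow> complex) \<Rightarrow> bool" where
  "has_a s J K w F H \<longleftrightarrow> (\<exists>G1 G2. has_phi s J w F G1 \<and> has_phi s J (K w) F G2 \<and>
       (\<forall>u. H u = (G1 u + \<i> * G2 u) / 2))"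

definition symplectic :: "('v::real_vector \<Rightarrow> 'v \<Rightarrow> real) \<Rightarrow> ('v \<Rightarrow> 'v) \<Rightarrow> bool" where
  "symplectic s g \<longleftrightarrow> linear g \<and> (\<forall>u v. s (g u) (g v) = s u v)"

definition p_op :: "('v::real_vector \<Rightarrow> 'v) \<Rightarrow> ('v \<Rightarrow> 'v) \<Rightarrow> 'v \<Rightarrow> 'v" where
  "p_op J g = (\<lambda>u. (1/2) *\<^sub>R (g u - J (g (J u))))"

definition q_op :: "('v::real_vector \<Rightarrow> 'v) \<Rightarrow> ('v \<Rightarrow> 'v) \<Rightarrow> 'v \<Rightarrow> 'v" where
  "q_op J g = (\<lambda>u. (1/2) *\<^sub>R (g u + J (g (J u))))"

definition T_op :: "('v::real_vector \<Rightarrow> 'v) \<Rightarrow> ('v \<Rightarrow> 'v) \<Rightarrow> 'v \<Rightarrow> 'v" where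
  "T_op J g = q_op J g \<circ> inv (p_op J g)"

definition gaussian :: "('v::real_vector \<Rightarrow> 'v \<Rightarrow> real) \<Rightarrow> ('v \<Rightarrow> 'v) \<Rightarrow> ('v \<Rightarrow> 'v) \<Rightarrow> 'v \<Rightarrow> complex" where
  "gaussian s J T = (\<lambda>u. exp ((1/4) * herm s J u (T u)))"

end

theory Submission
  imports Defs "HOL-Probability.Distributions"
begin

text \<open>Write d(u,v) = s u (J v) and h = herm s J. For an antilinear, d-symmetric T, completing
  the square in the exponent gives beta(sqrt 2 t x) f_T = f_T exp(t A_x + t^2 B_x) with
  A_x u = h(u, x - T x) / sqrt 2, hence phi(x) f_T = -i A_x f_T. The Fock-norm limit defining phi is
  controlled because |f_T u|^2 exp(-d(u,u)/2) = exp(-(d(u,u) - d(u, T u))/2) is a Gaussian in u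
  (T is a strict contraction for d), which absorbs every factor exp(a |u|).
  As h is complex-linear in its second argument, a_K(w) f_T = 0 as soon as
  (1 - T)(K w) = J (1 - T) w. For T_g = q p^-1 one computes (1 - T_g) g = p - q p^-1 q, which
  commutes with J; with K = g J g^-1 and w = g v this is exactly the required identity.\<close>


lemma nn_integral_exp_neg_sq_finite:
  fixes c :: real
  assumes "c > 0"
  shows "(\<integral>\<^sup>+x. ennreal (exp (- c * x\<^sup>2)) \<partial>lborel) < \<infinity>"
proof -
  define \<sigma> where "\<sigma> = sqrt (1 / (2 * c))"
  have \<sigma>: "\<sigma> > 0" "2 * \<sigma>\<^sup>2 = 1 / c"
    using assms by (simp_all add: \<sigma>_def)
  define K where "K = sqrt (2 * pi * \<sigma>\<^sup>2)"
  have K: "K > 0"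
    using \<sigma> by (simp add: K_def)
  have "exp (- c * x\<^sup>2) = K * normal_density 0 \<sigma> x" for x
    using K \<sigma> assms by (simp add: normal_density_def K_def field_simps)
  then have "(\<integral>\<^sup>+x. ennreal (exp (- c * x\<^sup>2)) \<partial>lborel)
      = ennreal K * (\<integral>\<^sup>+x. ennreal (normal_density 0 \<sigma> x) \<partial>lborel)"
    using K by (simp add: ennreal_mult nn_integral_cmult)
  also have "(\<integral>\<^sup>+x. ennreal (normal_density 0 \<sigma> x) \<partial>lborel) = 1"
    using \<sigma> by (subst nn_integral_eq_integral) (auto intro: integrable_normal_density)
  finally show ?thesis
    by simp
qed

lemma nn_integral_exp_neg_norm_sq_finite:
  fixes c :: real
  assumes "c > 0"
  shows "(\<integral>\<^sup>+u. ennreal (exp (- c * (norm u)\<^sup>2)) \<partial>(lborel :: 'a::euclidean_space measure)) < \<infinity>"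
proof -
  have "ennreal (exp (- c * (norm u)\<^sup>2)) = (\<Prod>b\<in>Basis. ennreal (exp (- c * (u \<bullet> b)\<^sup>2)))" for u :: 'a
  proof -
    have "(norm u)\<^sup>2 = (\<Sum>b\<in>Basis. (u \<bullet> b)\<^sup>2)"
      unfolding power2_norm_eq_inner by (subst euclidean_inner) (simp add: power2_eq_square)
    then show ?thesis
      by (simp add: sum_distrib_left exp_sum[symmetric] sum_negf prod_ennreal)
  qed
  then have "(\<integral>\<^sup>+u. ennreal (exp (- c * (norm u)\<^sup>2)) \<partial>(lborel :: 'a measure))
      = (\<Prod>b\<in>(Basis :: 'a set). \<integral>\<^sup>+x. ennreal (exp (- c * x\<^sup>2)) \<partial>lborel)"
    by (simp only:) (rule nn_integral_lborel_prod, auto)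
  then show ?thesis
    using nn_integral_exp_neg_sq_finite[OF assms] by (simp add: power_less_top_ennreal)
qed

lemma norm_exp_minus_one_minus_le:
  fixes z :: "'a::{real_normed_field, banach}"
  shows "norm (exp z - 1 - z) \<le> (norm z)\<^sup>2 * exp (norm z)"
proof -
  have "(\<lambda>k. z ^ (k + 2) /\<^sub>R fact (k + 2)) sums (exp z - (\<Sum>k<2. z ^ k /\<^sub>R fact k))"
    by (intro sums_split_initial_segment exp_converges)
  then have tail: "exp z - 1 - z = (\<Sum>k. z ^ (k + 2) /\<^sub>R fact (k + 2))"
    by (simp add: sums_iff eval_nat_numeral)
  have summable_tail: "summable (\<lambda>k. norm (z ^ (k + 2) /\<^sub>R fact (k + 2)))"
    using summable_norm_exp[of z] by (intro summable_ignore_initial_segment)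
  have summable_exp: "summable (\<lambda>k. (norm z)\<^sup>2 * (norm z ^ k /\<^sub>R fact k))"
    by (intro summable_mult summable_exp_generic)
  have term_le: "norm (z ^ (k + 2) /\<^sub>R fact (k + 2)) \<le> (norm z)\<^sup>2 * (norm z ^ k /\<^sub>R fact k)" for k
  proof -
    have "fact k \<le> (fact (k + 2) :: real)"
      by (intro fact_mono) auto
    then have "norm z ^ k / fact (k + 2) \<le> norm z ^ k / fact k"
      by (intro divide_left_mono) auto
    then have "(norm z)\<^sup>2 * (norm z ^ k / fact (k + 2)) \<le> (norm z)\<^sup>2 * (norm z ^ k /\<^sub>R fact k)"
      by (simp add: mult_left_mono divide_inverse_commute)
    moreover have "norm (z ^ (k + 2) /\<^sub>R fact (k + 2)) = (norm z)\<^sup>2 * (norm z ^ k / fact (k + 2))"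
      by (simp add: norm_power power_add divide_inverse mult.commute norm_mult power2_eq_square)
    ultimately show ?thesis
      by simp
  qed
  have "norm (exp z - 1 - z) \<le> (\<Sum>k. norm (z ^ (k + 2) /\<^sub>R fact (k + 2)))"
    unfolding tail by (rule summable_norm[OF summable_tail])
  also have "\<dots> \<le> (\<Sum>k. (norm z)\<^sup>2 * (norm z ^ k /\<^sub>R fact k))"
    by (rule suminf_le[OF term_le summable_tail summable_exp])
  also have "\<dots> = (norm z)\<^sup>2 * exp (norm z)"
    unfolding suminf_mult[OF summable_exp_generic] exp_def ..
  finally show ?thesis .
qed

lemma sq_le_four_exp:
  fixes y :: real
  assumes "y \<ge> 0"
  shows "y\<^sup>2 \<le> 4 * exp y"
proof -
  have "y / 2 \<le> exp (y / 2)"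
    using exp_ge_add_one_self[of "y / 2"] by linarith
  then have "(y / 2)\<^sup>2 \<le> (exp (y / 2))\<^sup>2"
    using assms by (intro power_mono) auto
  then show ?thesis
    by (simp add: power_divide power2_eq_square flip: exp_add)
qed

lemma norm_exp_quadratic_quotient_le:
  fixes t :: real and a b :: complex
  assumes "t \<noteq> 0" and "\<bar>t\<bar> \<le> 1"
  shows "norm ((exp (of_real t * a + (of_real t)\<^sup>2 * b) - 1) / of_real t - a)
     \<le> \<bar>t\<bar> * (4 + norm b) * exp (2 * (norm a + norm b))"
proof -
  define z where "z = of_real t * a + (of_real t)\<^sup>2 * b"
  define y where "y = norm a + norm b"
  have y: "y \<ge> 0"
    by (simp add: y_def)
  have "t\<^sup>2 = \<bar>t\<bar> * \<bar>t\<bar>"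
    by (simp add: power2_eq_square)
  also have "\<dots> \<le> \<bar>t\<bar>"
    using assms(2) by (metis abs_ge_zero mult_left_le_one_le)
  finally have "t\<^sup>2 \<le> \<bar>t\<bar>" .
  then have "norm z \<le> \<bar>t\<bar> * norm a + \<bar>t\<bar> * norm b"
    unfolding z_def using norm_triangle_ineq[of "of_real t * a" "(of_real t)\<^sup>2 * b"]
    by (simp add: norm_mult norm_power) (meson add_left_mono mult_right_mono norm_ge_zero order_trans)
  then have norm_z: "norm z \<le> \<bar>t\<bar> * y"
    by (simp add: y_def distrib_left)
  also have "\<dots> \<le> y"
    using assms(2) y by (simp add: mult_left_le_one_le)
  finally have "norm z \<le> y" .
  have "norm (exp z - 1 - z) \<le> (norm z)\<^sup>2 * exp (norm z)"
    by (rule norm_exp_minus_one_minus_le)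
  also have "\<dots> \<le> (\<bar>t\<bar> * y)\<^sup>2 * exp y"
    using norm_z \<open>norm z \<le> y\<close> by (intro mult_mono power_mono) auto
  finally have "norm (exp z - 1 - z) / \<bar>t\<bar> \<le> (\<bar>t\<bar> * y)\<^sup>2 * exp y / \<bar>t\<bar>"
    by (rule divide_right_mono) simp
  also have "\<dots> = \<bar>t\<bar> * (y\<^sup>2 * exp y)"
    using assms(1) by (simp add: power2_eq_square)
  also have "\<dots> \<le> \<bar>t\<bar> * (4 * exp (2 * y))"
    using mult_right_mono[OF sq_le_four_exp[OF y] exp_ge_zero, of y] exp_add[of y y]
    by (intro mult_left_mono) (simp_all add: mult.assoc flip: mult_2)
  finally have quadratic: "norm (exp z - 1 - z) / \<bar>t\<bar> \<le> \<bar>t\<bar> * (4 * exp (2 * y))" .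
  have linear: "\<bar>t\<bar> * norm b \<le> \<bar>t\<bar> * (norm b * exp (2 * y))"
    using y by (intro mult_left_mono) (simp_all add: mult_le_cancel_left1)
  have "z / of_real t = a + of_real t * b"
    using assms(1) by (simp add: z_def add_divide_distrib power2_eq_square)
  then have "(exp z - 1) / of_real t - a = (exp z - 1 - z) / of_real t + of_real t * b"
    by (simp add: diff_divide_distrib)
  then have "norm ((exp z - 1) / of_real t - a) \<le> norm (exp z - 1 - z) / \<bar>t\<bar> + \<bar>t\<bar> * norm b"
    using norm_triangle_ineq[of "(exp z - 1 - z) / of_real t" "of_real t * b"]
    by (simp add: norm_divide norm_mult)
  also have "\<dots> \<le> \<bar>t\<bar> * (4 * exp (2 * y)) + \<bar>t\<bar> * (norm b * exp (2 * y))"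
    using quadratic linear by (rule add_mono)
  also have "\<dots> = \<bar>t\<bar> * (4 + norm b) * exp (2 * y)"
    by (simp add: algebra_simps)
  finally show ?thesis
    by (simp add: z_def y_def)
qed

lemma exp_linear_mult_gaussian_le:
  fixes a c r :: real
  assumes "c > 0"
  shows "exp (a * r) * exp (- c * r\<^sup>2) \<le> exp (a\<^sup>2 / (2 * c)) * exp (- (c / 2) * r\<^sup>2)"
proof -
  have "0 \<le> (c / 2) * (r - a / c)\<^sup>2"
    using assms by simp
  also have "\<dots> = (a\<^sup>2 / (2 * c) - (c / 2) * r\<^sup>2) - (a * r - c * r\<^sup>2)"
    using assms by (simp add: power2_eq_square field_simps)
  finally show ?thesis
    by (simp add: mult_exp_exp)
qed

lemma gaussian_absorbs_exp_linear:
  fixes P Q M a c r :: real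
  assumes "c > 0" "0 \<le> P" "P \<le> exp (- c * r\<^sup>2)" "0 \<le> Q" "Q \<le> M * exp (a * r)"
  shows "Q * P \<le> M * exp (a\<^sup>2 / (2 * c)) * exp (- (c / 2) * r\<^sup>2)"
proof -
  have "0 \<le> M * exp (a * r)"
    using assms(4,5) by linarith
  then have "M \<ge> 0"
    by (simp add: zero_le_mult_iff)
  have "Q * P \<le> M * exp (a * r) * exp (- c * r\<^sup>2)"
    using assms by (intro mult_mono) auto
  also have "\<dots> \<le> M * (exp (a\<^sup>2 / (2 * c)) * exp (- (c / 2) * r\<^sup>2))"
    using \<open>M \<ge> 0\<close> exp_linear_mult_gaussian_le[OF assms(1), of a r]
    by (simp add: mult.assoc mult_left_mono)
  finally show ?thesis
    by (simp add: mult.assoc)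
qed

lemma quadratic_form_coercive:
  fixes Q :: "'a::euclidean_space \<Rightarrow> real"
  assumes "continuous_on UNIV Q"
    and homogeneous: "\<And>r u. Q (r *\<^sub>R u) = r\<^sup>2 * Q u"
    and positive: "\<And>u. u \<noteq> 0 \<Longrightarrow> Q u > 0"
  shows "\<exists>c>0. \<forall>u. c * (norm u)\<^sup>2 \<le> Q u"
proof -
  have "sphere (0::'a) 1 \<noteq> {}"
    using norm_Basis[OF SOME_Basis] by (metis mem_sphere_0 empty_iff)
  then obtain u\<^sub>0 where u\<^sub>0: "u\<^sub>0 \<in> sphere 0 1" and min: "\<And>v. v \<in> sphere 0 1 \<Longrightarrow> Q u\<^sub>0 \<le> Q v"
    using continuous_attains_inf[OF compact_sphere _ continuous_on_subset[OF assms(1)]] by blast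
  have "Q u\<^sub>0 * (norm u)\<^sup>2 \<le> Q u" for u
  proof (cases "u = 0")
    case True
    then show ?thesis
      using homogeneous[of 0 0] by simp
  next
    case False
    then have "Q u = (norm u)\<^sup>2 * Q ((1 / norm u) *\<^sub>R u)"
      using homogeneous[of "norm u" "(1 / norm u) *\<^sub>R u"] by simp
    moreover have "Q u\<^sub>0 \<le> Q ((1 / norm u) *\<^sub>R u)"
      using False by (intro min) simp
    ultimately show ?thesis
      by (metis mult.commute mult_left_mono zero_le_power2)
  qed
  moreover have "Q u\<^sub>0 > 0"
    using u\<^sub>0 by (intro positive) auto
  ultimately show ?thesis
    by blast
qed

lemma fock_norm2_le:
  fixes H :: "'v::euclidean_space \<Rightarrow> complex"
  assumes "c > 0" and "M \<ge> 0"
    and bound: "\<And>u. (cmod (H u))\<^sup>2 * exp (- (1/2) * s u (J u)) \<le> M * exp (- c * (norm u)\<^sup>2)"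
  shows "fock_norm2 s J H \<le> ennreal (M * (inverse ((2 * pi) ^ (DIM('v) div 2)) *
      enn2real (\<integral>\<^sup>+u. ennreal (exp (- c * (norm u)\<^sup>2)) \<partial>(lborel :: 'v measure))))"
proof -
  define I where "I = (\<integral>\<^sup>+u. ennreal (exp (- c * (norm u)\<^sup>2)) \<partial>(lborel :: 'v measure))"
  have "I < \<infinity>"
    unfolding I_def using nn_integral_exp_neg_norm_sq_finite[OF assms(1)] .
  have "(\<integral>\<^sup>+u. ennreal ((cmod (H u))\<^sup>2 * exp (- (1/2) * s u (J u))) \<partial>lborel)
      \<le> (\<integral>\<^sup>+u. ennreal M * ennreal (exp (- c * (norm (u :: 'v))\<^sup>2)) \<partial>lborel)"
  proof (rule nn_integral_mono)
    show "ennreal ((cmod (H u))\<^sup>2 * exp (- (1/2) * s u (J u))) \<le> ennreal M * ennreal (exp (- c * (norm u)\<^sup>2))"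
      for u
      using bound[of u] assms(2) by (simp add: ennreal_leI flip: ennreal_mult)
  qed
  also have "\<dots> = ennreal M * I"
    unfolding I_def by (rule nn_integral_cmult) simp
  also have "\<dots> = ennreal (M * enn2real I)"
    using \<open>I < \<infinity>\<close> assms(2) by (simp add: ennreal_mult)
  finally have "fock_norm2 s J H \<le> ennreal (inverse ((2 * pi) ^ (DIM('v) div 2))) * ennreal (M * enn2real I)"
    unfolding fock_norm2_def by (rule mult_left_mono) simp
  also have "\<dots> = ennreal (M * (inverse ((2 * pi) ^ (DIM('v) div 2)) * enn2real I))"
    by (subst ennreal_mult'[symmetric]) (auto simp: mult_ac)
  finally show ?thesis
    unfolding I_def .
qed

lemma fock_norm2_finite:
  fixes H :: "'v::euclidean_space \<Rightarrow> complex"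
  assumes "c > 0" and "M \<ge> 0"
    and "\<And>u. (cmod (H u))\<^sup>2 * exp (- (1/2) * s u (J u)) \<le> M * exp (- c * (norm u)\<^sup>2)"
  shows "fock_norm2 s J H < \<infinity>"
  using fock_norm2_le[of c M H s J] assms by (simp add: le_less_trans)

lemma fock_norm2_tendsto_zero:
  fixes E :: "real \<Rightarrow> 'v::euclidean_space \<Rightarrow> complex"
  assumes "c > 0" and "K \<ge> 0"
    and bound: "\<And>t u. t \<noteq> 0 \<Longrightarrow> \<bar>t\<bar> \<le> 1 \<Longrightarrow>
      (cmod (E t u))\<^sup>2 * exp (- (1/2) * s u (J u)) \<le> t\<^sup>2 * K * exp (- c * (norm u)\<^sup>2)"
  shows "((\<lambda>t. fock_norm2 s J (E t)) \<longlongrightarrow> 0) (at 0)"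
proof -
  define C where "C = K * (inverse ((2 * pi) ^ (DIM('v) div 2)) *
      enn2real (\<integral>\<^sup>+u. ennreal (exp (- c * (norm u)\<^sup>2)) \<partial>(lborel :: 'v measure)))"
  have "fock_norm2 s J (E t) \<le> ennreal (t\<^sup>2 * C)" if "t \<noteq> 0" "\<bar>t\<bar> \<le> 1" for t
    using fock_norm2_le[of c "t\<^sup>2 * K" "E t" s J] assms that by (simp add: C_def mult.assoc)
  then have upper: "\<forall>\<^sub>F t in at 0. fock_norm2 s J (E t) \<le> ennreal (t\<^sup>2 * C)"
    unfolding eventually_at by (intro exI[of _ 1]) auto
  have "((\<lambda>t. ennreal (t\<^sup>2 * C)) \<longlongrightarrow> ennreal (0\<^sup>2 * C)) (at (0::real))"
    by (intro tendsto_ennrealI tendsto_intros)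
  then have "((\<lambda>t. ennreal (t\<^sup>2 * C)) \<longlongrightarrow> 0) (at (0::real))"
    by simp
  from tendsto_sandwich[OF _ upper tendsto_const this] show ?thesis
    by simp
qed

lemma antiholomorphic_mult:
  assumes "antiholomorphic J F" and "antiholomorphic J G"
  shows "antiholomorphic J (\<lambda>u. F u * G u)"
  unfolding antiholomorphic_def
proof
  fix x
  obtain DF where DF: "(F has_derivative DF) (at x)" "\<And>w. DF (J w) = - \<i> * DF w"
    using assms(1) unfolding antiholomorphic_def by blast
  obtain DG where DG: "(G has_derivative DG) (at x)" "\<And>w. DG (J w) = - \<i> * DG w"
    using assms(2) unfolding antiholomorphic_def by blast
  have "((\<lambda>u. F u * G u) has_derivative (\<lambda>w. F x * DG w + DF w * G x)) (at x)"
    by (rule has_derivative_mult[OF DF(1) DG(1)])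
  moreover have "F x * DG (J w) + DF (J w) * G x = - \<i> * (F x * DG w + DF w * G x)" for w
    by (simp add: DF(2) DG(2) algebra_simps)
  ultimately show "\<exists>D. ((\<lambda>u. F u * G u) has_derivative D) (at x) \<and> (\<forall>w. D (J w) = - \<i> * D w)"
    by blast
qed

lemma antiholomorphic_antilinear:
  fixes L :: "'a::euclidean_space \<Rightarrow> complex"
  assumes "linear L" and "\<And>w. L (J w) = - \<i> * L w"
  shows "antiholomorphic J L"
  unfolding antiholomorphic_def using linear_imp_has_derivative[OF assms(1)] assms(2) by blast

text \<open>Nondegeneracy of s is not assumed: it follows from positivity of s u (J u).\<close>

locale complex_structure =
  fixes s :: "'v::euclidean_space \<Rightarrow> 'v \<Rightarrow> real" and J :: "'v \<Rightarrow> 'v"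
  assumes bilinear_s: "bilinear s"
    and skew: "\<And>u v. s u v = - s v u"
    and linear_J: "linear J"
    and J_J: "\<And>v. J (J v) = - v"
    and s_J_J: "\<And>u v. s (J u) (J v) = s u v"
    and positive: "\<And>u. u \<noteq> 0 \<Longrightarrow> s u (J u) > 0"
begin

lemmas s_simps = bilinear_ladd[OF bilinear_s] bilinear_radd[OF bilinear_s]
  bilinear_lmul[OF bilinear_s] bilinear_rmul[OF bilinear_s]
  bilinear_lneg[OF bilinear_s] bilinear_rneg[OF bilinear_s]
  bilinear_lsub[OF bilinear_s] bilinear_rsub[OF bilinear_s]
  bilinear_lzero[OF bilinear_s] bilinear_rzero[OF bilinear_s]

lemmas J_simps = linear_add[OF linear_J] linear_diff[OF linear_J] linear_neg[OF linear_J]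
  linear_0[OF linear_J] linear_cmul[OF linear_J]

lemma bounded_bilinear_s: "bounded_bilinear s"
  using bilinear_s bilinear_conv_bounded_bilinear by blast

lemma d_sym: "s u (J v) = s v (J u)"
  by (metis skew s_J_J J_J s_simps(6))

lemma s_J_left: "s (J u) v = - s u (J v)"
  using s_J_J[of u "J v"] by (simp add: J_J s_simps)

lemma s_J_J_right: "s u (J (J v)) = - s u v"
  by (simp add: J_J s_simps)

lemma d_nonneg: "s u (J u) \<ge> 0"
  using positive[of u] by (cases "u = 0") (auto simp: s_simps)

lemma d_cross_le: "2 * s a (J b) \<le> s a (J a) + s b (J b)"
proof -
  have "0 \<le> s (a - b) (J (a - b))"
    by (rule d_nonneg)
  also have "\<dots> = s a (J a) + s b (J b) - s a (J b) - s b (J a)"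
    by (simp add: s_simps J_simps algebra_simps)
  finally show ?thesis
    using d_sym[of b a] by simp
qed

abbreviation h :: "'v \<Rightarrow> 'v \<Rightarrow> complex" where
  "h \<equiv> herm s J"

lemma herm_simps:
  "h (a + b) c = h a c + h b c" "h a (b + c) = h a b + h a c"
  "h (a - b) c = h a c - h b c" "h a (b - c) = h a b - h a c"
  "h (- a) c = - h a c" "h a (- c) = - h a c"
  "h (r *\<^sub>R a) c = of_real r * h a c" "h a (r *\<^sub>R c) = of_real r * h a c"
  "h 0 c = 0" "h a 0 = 0"
  by (simp_all add: herm_def s_simps J_simps algebra_simps)

lemma herm_J_right: "h u (J v) = \<i> * h u v"
  by (simp add: herm_def s_J_J_right algebra_simps)

lemma herm_J_left: "h (J u) v = - \<i> * h u v"
  by (simp add: herm_def s_J_J s_J_left s_J_J_right algebra_simps)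

lemma bounded_bilinear_herm: "bounded_bilinear h"
proof -
  have "bilinear h"
    unfolding bilinear_def by (auto intro!: linearI simp: herm_simps scaleR_conv_of_real)
  then show ?thesis
    using bilinear_conv_bounded_bilinear by blast
qed

end

text \<open>T_contraction is the condition 1 - T^2 > 0 of the paper: as d(J u, T (J u)) = - d(u, T u),
  it says that |d(u, T u)| < d(u, u).\<close>

locale fock_gaussian = complex_structure s J
  for s :: "'v::euclidean_space \<Rightarrow> 'v \<Rightarrow> real" and J +
  fixes T :: "'v \<Rightarrow> 'v"
  assumes linear_T: "linear T"
    and T_J: "\<And>u. T (J u) = - J (T u)"
    and T_symmetric: "\<And>u w. s u (J (T w)) = s w (J (T u))"
    and T_contraction: "\<And>u. u \<noteq> 0 \<Longrightarrow> s u (J (T u)) < s u (J u)"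
begin

lemmas T_simps = linear_add[OF linear_T] linear_diff[OF linear_T] linear_neg[OF linear_T]
  linear_0[OF linear_T] linear_cmul[OF linear_T]

lemma s_T_symmetric: "s u (T w) = s w (T u)"
proof -
  have "s u (T w) = s u (J (T (J w)))"
    by (simp add: T_J J_simps s_simps J_J)
  also have "\<dots> = s (J w) (J (T u))"
    by (rule T_symmetric)
  also have "\<dots> = s w (T u)"
    by (rule s_J_J)
  finally show ?thesis .
qed

lemma herm_T_symmetric: "h u (T w) = h w (T u)"
  by (simp add: herm_def T_symmetric s_T_symmetric)

abbreviation fT :: "'v \<Rightarrow> complex" where
  "fT \<equiv> gaussian s J T"

lemma gaussian_weighted_decay:
  "\<exists>c>0. \<forall>u. (cmod (fT u))\<^sup>2 * exp (- (1/2) * s u (J u)) \<le> exp (- c * (norm u)\<^sup>2)"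
proof -
  have "bounded_linear J" "bounded_linear (\<lambda>u. J (T u))"
    using linear_J linear_T by (auto simp: linear_conv_bounded_linear intro: bounded_linear_compose)
  then have "continuous_on UNIV (\<lambda>u. s u (J u) - s u (J (T u)))"
    by (intro continuous_on_diff bounded_bilinear.continuous_on[OF bounded_bilinear_s]
        continuous_on_id linear_continuous_on)
  moreover have "s (r *\<^sub>R u) (J (r *\<^sub>R u)) - s (r *\<^sub>R u) (J (T (r *\<^sub>R u)))
      = r\<^sup>2 * (s u (J u) - s u (J (T u)))" for r u
    by (simp add: s_simps J_simps T_simps power2_eq_square algebra_simps)
  moreover have "u \<noteq> 0 \<Longrightarrow> 0 < s u (J u) - s u (J (T u))" for u
    using T_contraction[of u] by simp
  ultimately obtain c where c: "c > 0" "\<And>u. c * (norm u)\<^sup>2 \<le> s u (J u) - s u (J (T u))"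
    using quadratic_form_coercive[of "\<lambda>u. s u (J u) - s u (J (T u))"] by blast
  have "(cmod (fT u))\<^sup>2 * exp (- (1/2) * s u (J u)) \<le> exp (- (c / 2) * (norm u)\<^sup>2)" for u
  proof -
    have "cmod (fT u) = exp (s u (J (T u)) / 4)"
      by (simp add: gaussian_def herm_def)
    then have "(cmod (fT u))\<^sup>2 * exp (- (1/2) * s u (J u)) = exp (- (s u (J u) - s u (J (T u))) / 2)"
      by (simp add: power2_eq_square diff_divide_distrib flip: exp_add)
    then show ?thesis
      using c(2)[of u] by simp
  qed
  then show ?thesis
    using c(1) by (intro exI[of _ "c / 2"]) auto
qed

lemma gaussian_has_derivative:
  "(fT has_derivative (\<lambda>w. fT u * ((1/4) * (h u (T w) + h w (T u))))) (at u)"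
proof -
  have "((\<lambda>u. (1/4) * h u (T u)) has_derivative (\<lambda>w. (1/4) * (h u (T w) + h w (T u)))) (at u)"
    using bounded_bilinear.FDERIV[OF bounded_bilinear_herm has_derivative_ident
        linear_imp_has_derivative[OF linear_T]]
    by (intro has_derivative_mult_right) simp
  from has_derivative_compose[OF this has_field_derivative_imp_has_derivative[OF DERIV_exp]]
  show ?thesis
    by (simp add: gaussian_def[abs_def])
qed

lemma gaussian_antiholomorphic: "antiholomorphic J fT"
  unfolding antiholomorphic_def
proof
  fix u
  have "fT u * ((1/4) * (h u (T (J w)) + h (J w) (T u)))
      = - \<i> * (fT u * ((1/4) * (h u (T w) + h w (T u))))" for w
    by (simp add: T_J herm_simps herm_J_right herm_J_left algebra_simps)
  then show "\<exists>D. (fT has_derivative D) (at u) \<and> (\<forall>w. D (J w) = - \<i> * D w)"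
    using gaussian_has_derivative[of u] by blast
qed

lemma gaussian_in_fock_space: "fT \<in> fock_space s J"
proof -
  obtain c where "c > 0" "\<And>u. (cmod (fT u))\<^sup>2 * exp (- (1/2) * s u (J u)) \<le> exp (- c * (norm u)\<^sup>2)"
    using gaussian_weighted_decay by blast
  then have "fock_norm2 s J fT < \<infinity>"
    by (intro fock_norm2_finite[of c 1]) auto
  then show ?thesis
    by (simp add: fock_space_def gaussian_antiholomorphic)
qed

definition A :: "'v \<Rightarrow> 'v \<Rightarrow> complex" where
  "A x u = of_real (sqrt 2 / 2) * h u (x - T x)"

definition B :: "'v \<Rightarrow> complex" where
  "B x = (1/2) * (h x (T x) - h x x)"

lemma weyl_gaussian:
  "weyl s J ((sqrt 2 * t) *\<^sub>R x) fT u = fT u * exp (of_real t * A x u + (of_real t)\<^sup>2 * B x)"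
proof -
  define r where "r = sqrt 2 * t"
  have r2: "(complex_of_real t)\<^sup>2 = of_real r * of_real r / 2"
    unfolding r_def of_real_mult[symmetric] by (simp add: power2_eq_square algebra_simps)
  have r1: "complex_of_real t * of_real (sqrt 2 / 2) = of_real r / 2"
    unfolding r_def of_real_mult[symmetric] by (simp add: algebra_simps)
  have "(1/4) * h (2 *\<^sub>R u - r *\<^sub>R x) (r *\<^sub>R x) + (1/4) * h (u - r *\<^sub>R x) (T (u - r *\<^sub>R x))
     = (1/4) * h u (T u) + (of_real t * A x u + (of_real t)\<^sup>2 * B x)"
    unfolding A_def B_def r2 mult.assoc[symmetric] r1
    using herm_T_symmetric[of x u] by (simp add: herm_simps T_simps field_simps)
  then show ?thesis
    unfolding weyl_def gaussian_def r_def[symmetric] exp_add[symmetric] by simp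
qed

lemma linear_A: "linear (A x)"
  by (rule linearI) (simp_all add: A_def herm_simps scaleR_conv_of_real algebra_simps)

lemma A_J: "A x (J w) = - \<i> * A x w"
  by (simp add: A_def herm_J_left)

lemma phi_gaussian_in_fock_space: "(\<lambda>u. - \<i> * A x u * fT u) \<in> fock_space s J"
proof -
  obtain c where c: "c > 0" "\<And>u. (cmod (fT u))\<^sup>2 * exp (- (1/2) * s u (J u)) \<le> exp (- c * (norm u)\<^sup>2)"
    using gaussian_weighted_decay by blast
  obtain a where a: "\<And>u. cmod (A x u) \<le> a * norm u"
    using linear_bounded_pos[OF linear_A] by blast
  have bound: "(cmod (- \<i> * A x u * fT u))\<^sup>2 * exp (- (1/2) * s u (J u))
      \<le> 4 * exp (a\<^sup>2 / (2 * c)) * exp (- (c / 2) * (norm u)\<^sup>2)" for u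
  proof -
    have "(cmod (A x u))\<^sup>2 \<le> 4 * exp (cmod (A x u))"
      by (rule sq_le_four_exp) simp
    also have "\<dots> \<le> 4 * exp (a * norm u)"
      using a[of u] by simp
    finally have "(cmod (A x u))\<^sup>2 * ((cmod (fT u))\<^sup>2 * exp (- (1/2) * s u (J u)))
        \<le> 4 * exp (a\<^sup>2 / (2 * c)) * exp (- (c / 2) * (norm u)\<^sup>2)"
      using c(1) c(2)[of u] by (intro gaussian_absorbs_exp_linear) simp_all
    then show ?thesis
      by (simp add: norm_mult power_mult_distrib mult.assoc)
  qed
  have "fock_norm2 s J (\<lambda>u. - \<i> * A x u * fT u) < \<infinity>"
    using c(1) by (intro fock_norm2_finite[of "c / 2" "4 * exp (a\<^sup>2 / (2 * c))"] bound) simp_all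
  moreover have "linear (\<lambda>u. - \<i> * A x u)"
    by (rule linearI) (simp_all add: linear_add[OF linear_A] linear_cmul[OF linear_A]
        scaleR_conv_of_real algebra_simps)
  then have "antiholomorphic J (\<lambda>u. - \<i> * A x u * fT u)"
    by (intro antiholomorphic_mult antiholomorphic_antilinear gaussian_antiholomorphic)
      (simp_all add: A_J)
  ultimately show ?thesis
    by (simp add: fock_space_def)
qed

lemma weyl_remainder_le:
  "\<exists>c>0. \<exists>K\<ge>0. \<forall>t u. t \<noteq> 0 \<longrightarrow> \<bar>t\<bar> \<le> 1 \<longrightarrow>
     (cmod ((weyl s J ((sqrt 2 * t) *\<^sub>R x) fT u - fT u) / of_real t - \<i> * (- \<i> * A x u * fT u)))\<^sup>2
       * exp (- (1/2) * s u (J u)) \<le> t\<^sup>2 * K * exp (- c * (norm u)\<^sup>2)"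
proof -
  obtain c where c: "c > 0" "\<And>u. (cmod (fT u))\<^sup>2 * exp (- (1/2) * s u (J u)) \<le> exp (- c * (norm u)\<^sup>2)"
    using gaussian_weighted_decay by blast
  obtain a where a: "\<And>u. cmod (A x u) \<le> a * norm u"
    using linear_bounded_pos[OF linear_A] by blast
  define b where "b = cmod (B x)"
  define K where "K = (4 + b)\<^sup>2 * exp (4 * b) * exp ((4 * a)\<^sup>2 / (2 * c))"
  have "(cmod ((weyl s J ((sqrt 2 * t) *\<^sub>R x) fT u - fT u) / of_real t - \<i> * (- \<i> * A x u * fT u)))\<^sup>2
      * exp (- (1/2) * s u (J u)) \<le> t\<^sup>2 * K * exp (- (c / 2) * (norm u)\<^sup>2)"
    if "t \<noteq> 0" "\<bar>t\<bar> \<le> 1" for t u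
  proof -
    define Q where "Q = (exp (of_real t * A x u + (of_real t)\<^sup>2 * B x) - 1) / of_real t - A x u"
    have remainder: "(weyl s J ((sqrt 2 * t) *\<^sub>R x) fT u - fT u) / of_real t - \<i> * (- \<i> * A x u * fT u)
        = fT u * Q"
      unfolding weyl_gaussian Q_def by (simp add: algebra_simps diff_divide_distrib)
    have "cmod Q \<le> \<bar>t\<bar> * (4 + b) * exp (2 * (cmod (A x u) + b))"
      unfolding Q_def b_def using that by (rule norm_exp_quadratic_quotient_le)
    also have "\<dots> \<le> \<bar>t\<bar> * (4 + b) * exp (2 * (a * norm u + b))"
      using a[of u] by (intro mult_left_mono) (simp_all add: b_def)
    finally have "(cmod Q)\<^sup>2 \<le> (\<bar>t\<bar> * (4 + b) * exp (2 * (a * norm u + b)))\<^sup>2"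
      by (intro power_mono) auto
    also have "\<dots> = t\<^sup>2 * (4 + b)\<^sup>2 * exp (4 * b) * exp (4 * a * norm u)"
      by (simp add: power_mult_distrib power2_abs flip: exp_add exp_of_nat_mult)
    finally have "(cmod Q)\<^sup>2 * ((cmod (fT u))\<^sup>2 * exp (- (1/2) * s u (J u)))
        \<le> t\<^sup>2 * (4 + b)\<^sup>2 * exp (4 * b) * exp ((4 * a)\<^sup>2 / (2 * c)) * exp (- (c / 2) * (norm u)\<^sup>2)"
      using c(1) c(2)[of u] by (intro gaussian_absorbs_exp_linear) simp_all
    then show ?thesis
      unfolding remainder K_def by (simp add: norm_mult power_mult_distrib mult_ac)
  qed
  moreover have "K \<ge> 0"
    by (simp add: K_def)
  ultimately show ?thesis
    using c(1) by (intro exI[of _ "c / 2"] exI[of _ K] conjI allI impI) simp_all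
qed

lemma has_phi_gaussian: "has_phi s J x fT (\<lambda>u. - \<i> * A x u * fT u)"
proof -
  obtain c K where "c > 0" "K \<ge> 0" and bound: "\<And>t u. t \<noteq> 0 \<Longrightarrow> \<bar>t\<bar> \<le> 1 \<Longrightarrow>
     (cmod ((weyl s J ((sqrt 2 * t) *\<^sub>R x) fT u - fT u) / of_real t - \<i> * (- \<i> * A x u * fT u)))\<^sup>2
       * exp (- (1/2) * s u (J u)) \<le> t\<^sup>2 * K * exp (- c * (norm u)\<^sup>2)"
    using weyl_remainder_le by blast
  show ?thesis
    unfolding has_phi_def
    by (intro conjI gaussian_in_fock_space phi_gaussian_in_fock_space
        fock_norm2_tendsto_zero[OF \<open>c > 0\<close> \<open>K \<ge> 0\<close>] bound)
qed

lemma has_a_gaussian_eq_0: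
  assumes "K w - T (K w) = J (w - T w)"
  shows "has_a s J K w fT (\<lambda>u. 0)"
  unfolding has_a_def
proof (intro exI conjI allI)
  show "has_phi s J w fT (\<lambda>u. - \<i> * A w u * fT u)"
    and "has_phi s J (K w) fT (\<lambda>u. - \<i> * A (K w) u * fT u)"
    by (rule has_phi_gaussian)+
  have "A (K w) u = \<i> * A w u" for u
    by (simp add: A_def assms herm_J_right)
  then show "0 = (- \<i> * A w u * fT u + \<i> * (- \<i> * A (K w) u * fT u)) / 2" for u
    by (simp add: algebra_simps)
qed

end

locale symplectic_map = complex_structure s J
  for s :: "'v::euclidean_space \<Rightarrow> 'v \<Rightarrow> real" and J +
  fixes g :: "'v \<Rightarrow> 'v"
  assumes symplectic_g: "symplectic s g"
begin

lemma linear_g: "linear g" and s_g: "s (g u) (g v) = s u v"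
  using symplectic_g by (auto simp: symplectic_def)

lemmas g_simps = linear_add[OF linear_g] linear_diff[OF linear_g] linear_neg[OF linear_g]
  linear_0[OF linear_g] linear_cmul[OF linear_g]

lemma inj_g: "inj g"
proof -
  have "x = 0" if "g x = 0" for x
  proof -
    have "s x (J x) = s (g x) (g (J x))"
      by (simp add: s_g)
    also have "\<dots> = 0"
      using that by (simp add: s_simps)
    finally show "x = 0"
      by (metis order.irrefl positive)
  qed
  then show ?thesis
    using linear_inj_iff_eq_0[OF linear_g] by blast
qed

abbreviation p :: "'v \<Rightarrow> 'v" where "p \<equiv> p_op J g"
abbreviation q :: "'v \<Rightarrow> 'v" where "q \<equiv> q_op J g"
abbreviation Tg :: "'v \<Rightarrow> 'v" where "Tg \<equiv> T_op J g"

lemma linear_p: "linear p" and linear_q: "linear q"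
  unfolding p_op_def q_op_def
  by (intro linear_compose_scale_right linear_compose_sub linear_compose_add linear_g linear_J
      linear_compose[OF linear_J, unfolded o_def] linear_compose[OF linear_g, unfolded o_def]
      linear_compose[OF linear_J linear_g, unfolded o_def])+

lemmas p_simps = linear_add[OF linear_p] linear_diff[OF linear_p] linear_neg[OF linear_p]
  linear_0[OF linear_p] linear_cmul[OF linear_p]
lemmas q_simps = linear_add[OF linear_q] linear_diff[OF linear_q] linear_neg[OF linear_q]
  linear_0[OF linear_q] linear_cmul[OF linear_q]

lemma p_J: "p (J x) = J (p x)" and q_J: "q (J x) = - J (q x)"
  by (simp_all add: p_op_def q_op_def J_J g_simps J_simps algebra_simps)

lemma p_plus_q: "p x + q x = g x"
proof -
  have "(1/2) *\<^sub>R (a - b) + (1/2) *\<^sub>R (a + b) = a" for a b :: 'v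
    by (simp add: scaleR_add_right[symmetric] scaleR_2)
  then show ?thesis
    unfolding p_op_def q_op_def .
qed

text \<open>By polarisation, d(p x, p x) - d(q x, q x) = s (g x) (g (J x)) = s x (J x).\<close>

lemma d_p: "s (p x) (J (p x)) = s x (J x) + s (q x) (J (q x))"
proof -
  have polarisation: "s ((1/2) *\<^sub>R (a - b)) (J ((1/2) *\<^sub>R (a - b)))
      = s ((1/2) *\<^sub>R (a + b)) (J ((1/2) *\<^sub>R (a + b))) - s a (J b)" for a b
    using d_sym[of a b] by (simp add: s_simps J_simps algebra_simps)
  have "s (g x) (J (J (g (J x)))) = - s x (J x)"
    by (simp add: J_J s_simps s_g)
  then show ?thesis
    unfolding p_op_def q_op_def polarisation by simp
qed

lemma bij_p: "bij p"
proof -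
  have "x = 0" if "p x = 0" for x
  proof -
    have "s x (J x) \<le> 0"
      using d_p[of x] that d_nonneg[of "q x"] by (simp add: s_simps)
    then show "x = 0"
      by (metis not_less positive)
  qed
  then have "inj p"
    using linear_inj_iff_eq_0[OF linear_p] by blast
  then show ?thesis
    using linear_injective_imp_surjective[OF linear_p] by (simp add: bij_def)
qed

lemma p_inv_p [simp]: "p (inv p y) = y" and inv_p_p [simp]: "inv p (p x) = x"
  using bij_p by (simp_all add: bij_is_surj surj_f_inv_f bij_is_inj)

lemma linear_inv_p: "linear (inv p)"
  using inj_linear_imp_inv_linear[OF linear_p bij_is_inj[OF bij_p]] .

lemma inv_p_J: "inv p (J y) = J (inv p y)"
proof -
  have "J y = p (J (inv p y))"
    by (simp add: p_J)
  then show ?thesis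
    by simp
qed

lemma Tg_eq: "Tg u = q (inv p u)"
  by (simp add: T_op_def)

lemma d_p_q_symmetric: "s (p x) (J (q y)) = s (p y) (J (q x))"
proof -
  have expand: "4 * s (p x) (J (q y)) = s (g x) (J (g y)) - s (g (J x)) (J (g (J y)))" for x y
    by (simp add: p_op_def q_op_def s_simps J_simps J_J s_J_J s_g s_J_left g_simps algebra_simps)
  show ?thesis
    using expand[of x y] expand[of y x] d_sym[of "g x" "g y"] d_sym[of "g (J x)" "g (J y)"] by simp
qed

lemma Tg_contraction:
  assumes "u \<noteq> 0"
  shows "s u (J (Tg u)) < s u (J u)"
proof -
  define x where "x = inv p u"
  have u: "u = p x" and Tg_p: "Tg (p x) = q x"
    by (simp_all add: x_def Tg_eq)
  have "x \<noteq> 0"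
    using assms u by (auto simp: p_simps)
  have "2 * s (p x) (J (q x)) \<le> s (p x) (J (p x)) + s (q x) (J (q x))"
    by (rule d_cross_le)
  then show ?thesis
    using d_p[of x] positive[OF \<open>x \<noteq> 0\<close>] unfolding u Tg_p by linarith
qed

sublocale fock_gaussian s J Tg
proof (intro fock_gaussian.intro[OF complex_structure_axioms] fock_gaussian_axioms.intro)
  show "linear Tg"
    unfolding T_op_def by (rule linear_compose[OF linear_inv_p linear_q])
  show "Tg (J u) = - J (Tg u)" for u
    by (simp add: Tg_eq inv_p_J q_J)
  show "s u (J (Tg w)) = s w (J (Tg u))" for u w
    using d_p_q_symmetric[of "inv p u" "inv p w"] by (simp add: Tg_eq)
  show "u \<noteq> 0 \<Longrightarrow> s u (J (Tg u)) < s u (J u)" for u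
    by (rule Tg_contraction)
qed

lemma one_minus_Tg_g_J: "g (J v) - Tg (g (J v)) = J (g v - Tg (g v))"
proof -
  have "g x - Tg (g x) = p x - q (inv p (q x))" for x
  proof -
    have "inv p (g x) = x + inv p (q x)"
      using p_plus_q[of x, symmetric] by (simp add: linear_add[OF linear_inv_p])
    then show ?thesis
      using p_plus_q[of x] by (simp add: Tg_eq q_simps algebra_simps)
  qed
  then show ?thesis
    by (simp add: p_J q_J inv_p_J linear_neg[OF linear_inv_p] q_simps J_simps)
qed

end

theorem lemma4p5:
  fixes s :: "'v::euclidean_space \<Rightarrow> 'v \<Rightarrow> real" and J g :: "'v \<Rightarrow> 'v"
  assumes "bilinear s"
    and "\<forall>u v. s u v = - s v u"
    and "\<forall>u. (\<forall>v. s u v = 0) \<longrightarrow> u = 0"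
    and "linear J"
    and "\<forall>v. J (J v) = - v"
    and "\<forall>u v. s (J u) (J v) = s u v"
    and "\<forall>u. u \<noteq> 0 \<longrightarrow> s u (J u) > 0"
    and "symplectic s g"
  shows "\<forall>v. has_a s J (g \<circ> J \<circ> inv g) (g v) (gaussian s J (T_op J g)) (\<lambda>u. 0)"
proof
  fix v
  interpret symplectic_map s J g
    by (intro symplectic_map.intro complex_structure.intro symplectic_map_axioms.intro)
      (use assms in blast)+
  show "has_a s J (g \<circ> J \<circ> inv g) (g v) (gaussian s J (T_op J g)) (\<lambda>u. 0)"
  proof (rule has_a_gaussian_eq_0)
    have "(g \<circ> J \<circ> inv g) (g v) = g (J v)"
      using inj_g by simp
    then show "(g \<circ> J \<circ> inv g) (g v) - Tg ((g \<circ> J \<circ> inv g) (g v)) = J (g v - Tg (g v))"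
      using one_minus_Tg_g_J by simp
  qed
qed

end
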